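(* Let $X,Y$ be sets of numbers with $X<Y$ and let $a=(A\mid B)$ be a number (so $(A\mid B)$ is a cut in $T_{g(a)}$). Then $a$ is the unique number of minimal generation among all numbers $z$ with $X<z<Y$ if and only if the following three conditions hold: (i) $X<a<Y$; (ii) for every $t\in A$ there exists $x\in X$ with $x\geqslant t$; (iii) for every $t\in B$ there exists $y\in Y$ with $y\leqslant t$.
   Context: For a totally ordered set $E$, a cut in $E$ is a pair $(A\mid B)$ of subsets of $E$ with $A\cap B=\emptyset$, $A\cup B=E$ and $a\leqslant b$ for all $a\in A$, $b\in B$. The set $\mathcal C(E)$ of cuts is totally ordered by $(A\mid B)\leqslant (C\mid D)$ iff $A\subset C$. The amalgam $E\cup\mathcal C(E)$ (with $E$ and $\mathcal C(E)$ regarded as disjoint) is totally ordered by combining the orders on $E$ and on $\mathcal C(E)$ with the rule: for $x\in E$ and $c=(A\mid B)\in\mathcal C(E)$, $x<c$ if $x\in A$ and $c<x$ if $x\in B$. Numbers are built by transfinite recursion on ordinals $\alpha$: $T_\alpha=\bigcup_{\beta<\alpha}S_\beta$ (a totally ordered set), $S_\alpha=\mathcal C(T_\alpha)$ is the set of cuts in $T_\alpha$, and $T_{\alpha+1}=T_\alpha\cup S_\alpha$ carries the amalgam order. The class of numbers is $\mathsf S=\bigcup_\alpha S_\alpha$ with the resulting total order; the elements of $S_\alpha$ are the numbers of generation $\alpha$, written $g(a)=\alpha$. For sets of numbers, $X<z$ means $x<z$ for all $x\in X$, and $z<Y$ means $z<y$ for all $y\in Y$. For sets $X<Y$ of numbers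 there always exists a unique number of minimal generation among the numbers $z$ with $X<z<Y$. *)

theory Defs
  imports Main
begin

definition is_cut :: "'a::order set \<Rightarrow> 'a set \<Rightarrow> 'a set \<Rightarrow> bool" where
  "is_cut E A B \<longleftrightarrow> A \<inter> B = {} \<and> A \<union> B = E \<and> (\<forall>a\<in>A. \<forall>b\<in>B. a \<le> b)"

definition T_gen :: "('n \<Rightarrow> 'o::order) \<Rightarrow> 'o \<Rightarrow> 'n set" where
  "T_gen g \<alpha> = {x. g x < \<alpha>}"

text \<open>The number system: a type 'n of numbers, totally ordered, with generation map g
  into a well-ordered type 'o of ordinals (an initial segment of the ordinals), and the map c
  sending each number a to its cut (A | B) in T_(g a).  The axioms say exactly that
  S_alpha = {a. g a = alpha} is (via c) the set of all cuts of T_alpha, ordered by inclusion of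
  lower parts, and that T_(alpha+1) carries the amalgam order.\<close>
definition number_system :: "('n::linorder \<Rightarrow> 'o::wellorder) \<Rightarrow> ('n \<Rightarrow> 'n set \<times> 'n set) \<Rightarrow> bool" where
  "number_system g c \<longleftrightarrow>
     (\<forall>a. is_cut (T_gen g (g a)) (fst (c a)) (snd (c a))) \<and>
     (\<forall>\<alpha> A B. is_cut (T_gen g \<alpha>) A B \<longrightarrow> (\<exists>!a. g a = \<alpha> \<and> c a = (A, B))) \<and>
     (\<forall>a b. g a = g b \<longrightarrow> (a \<le> b \<longleftrightarrow> fst (c a) \<subseteq> fst (c b))) \<and>
     (\<forall>a x. g x < g a \<longrightarrow> ((x < a \<longleftrightarrow> x \<in> fst (c a)) \<and> (a < x \<longleftrightarrow> x \<in> snd (c a))))"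

definition between :: "'n::order set \<Rightarrow> 'n set \<Rightarrow> 'n \<Rightarrow> bool" where
  "between X Y z \<longleftrightarrow> (\<forall>x\<in>X. x < z) \<and> (\<forall>y\<in>Y. z < y)"

definition simplest_between :: "('n::order \<Rightarrow> 'o::order) \<Rightarrow> 'n set \<Rightarrow> 'n set \<Rightarrow> 'n \<Rightarrow> bool" where
  "simplest_between g X Y a \<longleftrightarrow> between X Y a \<and>
     (\<forall>z. between X Y z \<longrightarrow> g a \<le> g z) \<and>
     (\<forall>z. between X Y z \<and> g z = g a \<longrightarrow> z = a)"

end

theory Submission
  imports Defs
begin

text \<open>Every number older than \<open>a = (A | B)\<close> lies in \<open>A\<close> (below \<open>a\<close>) or in \<open>B\<close> (above \<open>a\<close>),
  and two distinct numbers of the same generation are separated by an older number. Hence the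
  simplest number between \<open>X\<close> and \<open>Y\<close> is a number between them such that no older number is
  between them, and conditions (ii) and (iii) say precisely that no element of \<open>A\<close> lies above
  all of \<open>X\<close> and no element of \<open>B\<close> below all of \<open>Y\<close>.\<close>

lemma is_cut_upper_eq: "is_cut E A B \<Longrightarrow> B = E - A"
  unfolding is_cut_def by blast

lemma between_convex:
  fixes X Y :: "'a::order set"
  assumes "between X Y u" "between X Y w" "u < t" "t < w"
  shows "between X Y t"
  using assms unfolding between_def by (meson order.strict_trans)

lemma number_system_cut:
  "number_system g c \<Longrightarrow> is_cut (T_gen g (g a)) (fst (c a)) (snd (c a))"
  unfolding number_system_def by blast

lemma number_system_older_iff:
  "number_system g c \<Longrightarrow> g t < g a \<longleftrightarrow> t \<in> fst (c a) \<or> t \<in> snd (c a)"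
  using number_system_cut[of g c a] unfolding is_cut_def T_gen_def by blast

lemma number_system_less_iff_lower:
  "number_system g c \<Longrightarrow> g t < g a \<Longrightarrow> t < a \<longleftrightarrow> t \<in> fst (c a)"
  unfolding number_system_def by blast

lemma number_system_greater_iff_upper:
  "number_system g c \<Longrightarrow> g t < g a \<Longrightarrow> a < t \<longleftrightarrow> t \<in> snd (c a)"
  unfolding number_system_def by blast

lemma number_system_le_iff_lower_subset:
  "number_system g c \<Longrightarrow> g a = g b \<Longrightarrow> a \<le> b \<longleftrightarrow> fst (c a) \<subseteq> fst (c b)"
  unfolding number_system_def by blast

lemma number_system_eq_if_cut_eq:
  assumes ns: "number_system g c" and "g z = g a" "c z = c a"
  shows "z = a"
proof -
  have "\<exists>!b. g b = g a \<and> c b = (fst (c a), snd (c a))"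
    using ns number_system_cut[OF ns, of a] unfolding number_system_def by blast
  then show ?thesis using assms(2,3) by auto
qed

lemma number_system_older_between:
  assumes ns: "number_system g c" and gen: "g z = g a" and "z < a"
  obtains t where "g t < g a" "z < t" "t < a"
proof -
  have sub: "fst (c z) \<subseteq> fst (c a)"
    using number_system_le_iff_lower_subset[OF ns gen] \<open>z < a\<close> by (simp add: less_imp_le)
  have "fst (c z) \<noteq> fst (c a)"
  proof
    assume lower_eq: "fst (c z) = fst (c a)"
    have "snd (c z) = snd (c a)"
      using is_cut_upper_eq[OF number_system_cut[OF ns, of z]]
        is_cut_upper_eq[OF number_system_cut[OF ns, of a]] lower_eq gen by simp
    with lower_eq have "z = a"
      using number_system_eq_if_cut_eq[OF ns gen] by (simp add: prod_eq_iff)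
    with \<open>z < a\<close> show False by simp
  qed
  with sub obtain t where t: "t \<in> fst (c a)" "t \<notin> fst (c z)" by blast
  then have older: "g t < g a" using number_system_older_iff[OF ns] by blast
  then have "t \<in> snd (c z)" using number_system_older_iff[OF ns, of t z] t(2) gen by simp
  then have "z < t" using number_system_greater_iff_upper[OF ns] older gen by simp
  moreover have "t < a" using number_system_less_iff_lower[OF ns older] t(1) by simp
  ultimately show thesis using that older by blast
qed

lemma simplest_between_iff_no_older_between:
  assumes ns: "number_system g c"
  shows "simplest_between g X Y a \<longleftrightarrow>
           between X Y a \<and> (\<forall>t. g t < g a \<longrightarrow> \<not> between X Y t)"
proof
  show "simplest_between g X Y a \<Longrightarrow> between X Y a \<and> (\<forall>t. g t < g a \<longrightarrow> \<not> between X Y t)"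
    unfolding simplest_between_def by (meson leD)
next
  assume a: "between X Y a \<and> (\<forall>t. g t < g a \<longrightarrow> \<not> between X Y t)"
  have "z = a" if z: "between X Y z" and gen: "g z = g a" for z
  proof (rule ccontr)
    assume "z \<noteq> a"
    then consider "z < a" | "a < z" by fastforce
    then obtain t where "g t < g a" "between X Y t"
    proof cases
      case 1
      then obtain t where "g t < g a" "z < t" "t < a"
        using number_system_older_between[OF ns gen] by blast
      then show thesis using that between_convex[OF z] a by blast
    next
      case 2
      then obtain t where "g t < g z" "a < t" "t < z"
        using number_system_older_between[OF ns gen[symmetric]] by blast
      then show thesis using that between_convex[OF _ z] a gen by auto
    qed
    with a show False by blast
  qed
  with a show "simplest_between g X Y a"
    unfolding simplest_between_def by (meson not_le)
qed

lemma no_older_between_iff: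
  assumes ns: "number_system g c" and a: "between X Y a" and cut: "c a = (A, B)"
  shows "(\<forall>t. g t < g a \<longrightarrow> \<not> between X Y t) \<longleftrightarrow>
           (\<forall>t\<in>A. \<exists>x\<in>X. x \<ge> t) \<and> (\<forall>t\<in>B. \<exists>y\<in>Y. y \<le> t)"
proof -
  have older_lower: "g t < g a \<and> t < a \<longleftrightarrow> t \<in> A" for t
    using number_system_less_iff_lower[OF ns] number_system_older_iff[OF ns] cut by auto
  have older_upper: "g t < g a \<and> a < t \<longleftrightarrow> t \<in> B" for t
    using number_system_greater_iff_upper[OF ns] number_system_older_iff[OF ns] cut by auto
  show ?thesis
  proof
    assume no_older: "\<forall>t. g t < g a \<longrightarrow> \<not> between X Y t"
    have "\<exists>x\<in>X. x \<ge> t" if "t \<in> A" for t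
    proof (rule ccontr)
      assume "\<not> ?thesis"
      then have "\<forall>x\<in>X. x < t" by (simp add: not_le)
      moreover have "\<forall>y\<in>Y. t < y"
        using a older_lower[of t] \<open>t \<in> A\<close> unfolding between_def by force
      ultimately have "between X Y t" unfolding between_def by blast
      with no_older older_lower[of t] \<open>t \<in> A\<close> show False by blast
    qed
    moreover have "\<exists>y\<in>Y. y \<le> t" if "t \<in> B" for t
    proof (rule ccontr)
      assume "\<not> ?thesis"
      then have "\<forall>y\<in>Y. t < y" by (simp add: not_le)
      moreover have "\<forall>x\<in>X. x < t"
        using a older_upper[of t] \<open>t \<in> B\<close> unfolding between_def by force
      ultimately have "between X Y t" unfolding between_def by blast
      with no_older older_upper[of t] \<open>t \<in> B\<close> show False by blast
    qed
    ultimately show "(\<forall>t\<in>A. \<exists>x\<in>X. x \<ge> t) \<and> (\<forall>t\<in>B. \<exists>y\<in>Y. y \<le> t)"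
      by blast
  next
    assume bounds: "(\<forall>t\<in>A. \<exists>x\<in>X. x \<ge> t) \<and> (\<forall>t\<in>B. \<exists>y\<in>Y. y \<le> t)"
    show "\<forall>t. g t < g a \<longrightarrow> \<not> between X Y t"
    proof (intro allI impI notI)
      fix t assume "g t < g a" and t: "between X Y t"
      then have "t \<in> A \<or> t \<in> B"
        using number_system_older_iff[OF ns] cut by simp
      with bounds t show False unfolding between_def by (blast dest: leD)
    qed
  qed
qed

theorem mainTheorem3:
  fixes g :: "'n::linorder \<Rightarrow> 'o::wellorder" and c :: "'n \<Rightarrow> 'n set \<times> 'n set"
    and X Y A B :: "'n set" and a :: 'n
  assumes "number_system g c"
    and "\<forall>x\<in>X. \<forall>y\<in>Y. x < y"
    and "c a = (A, B)"
  shows "simplest_between g X Y a \<longleftrightarrow>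
           (between X Y a \<and>
            (\<forall>t\<in>A. \<exists>x\<in>X. x \<ge> t) \<and>
            (\<forall>t\<in>B. \<exists>y\<in>Y. y \<le> t))"
  unfolding simplest_between_iff_no_older_between[OF assms(1)]
  by (rule conj_cong[OF refl no_older_between_iff[OF assms(1) _ assms(3)]])

end
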